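(* Let \(X\) be a nonempty set and let \(\Phi\) be a mapping with domain \(X^{2}\). Then the following conditions are equivalent. (i) There is a totally ordered set \(Q\) such that \(\Phi\) is combinatorially similar to a \(Q\)-pseudoultrametric. (ii) There is a poset \(Q\) such that \(\Phi\) is combinatorially similar to a \(Q\)-pseudoultrametric. (iii) \(\Phi\) is symmetric, the transitive closure \(u_{\Phi}^{t}\) of \(u_{\Phi}\) is antisymmetric, there is \(a_0 \in \Phi(X^{2})\) for which \(\Phi\) is \(a_0\)-coherent, and for every triple \(\langle x_1, x_2, x_3\rangle\) of points of \(X\) there is a permutation \((i_1,i_2,i_3)\) of \((1,2,3)\) such that \(\Phi(x_{i_1}, x_{i_2}) = \Phi(x_{i_2}, x_{i_3})\). (iv) There is \(b_0 \in \Phi(X^{2})\) such that \(\Phi(x,x) = b_0\) for every \(x \in X\), the binary relation \(\preccurlyeq_{\Phi} := u_{\Phi}^{t} \cup \Delta_{\Phi(X^{2})}\) (where \(\Delta_{\Phi(X^2)}=\{\langle b,b\rangle: b\in\Phi(X^2)\}\)) is a partial order on \(\Phi(X^{2})\), \(b_0\) is the smallest element of \((\Phi(X^{2}), \preccurlyeq_{\Phi})\), and \(\Phi\) is a \(\preccurlyeq_{\Phi}\)-pseudoultrametric on \(X\).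
   Context: For a mapping \(F\) with domain \(A\), \(F(A)\) denotes its range. Let \((Q,\preccurlyeq_Q)\) be a poset with a smallest element \(q_0\) and \(Z\) a nonempty set. A mapping \(d\colon Z^2\to Q\) is a \(Q\)-pseudoultrametric (= \(\preccurlyeq_Q\)-pseudoultrametric) if \(d\) is symmetric, \(d(z,z)=q_0\) for all \(z\in Z\), and for every triple \(\langle z_1,z_2,z_3\rangle\) of points of \(Z\) there is a permutation \((i_1,i_2,i_3)\) of \((1,2,3)\) with \(d(z_{i_1},z_{i_3})\preccurlyeq_Q d(z_{i_1},z_{i_2})\) and \(d(z_{i_1},z_{i_2})=d(z_{i_2},z_{i_3})\). For nonempty sets \(X,Y\) and mappings \(\Phi\) with domain \(X^2\), \(\Psi\) with domain \(Y^2\), \(\Phi\) is combinatorially similar to \(\Psi\) if there are bijections \(f\colon \Phi(X^2)\to\Psi(Y^2)\) and \(g\colon Y\to X\) with \(\Psi(x,y)=f(\Phi(g(x),g(y)))\) for all \(x,y\in Y\). \(\Phi\) with domain \(X^2\) is strongly consistent with an equivalence relation \(R\) on \(X\) if \(\langle x_1,x_2\rangle\in R\), \(\langle x_3,x_4\rangle\in R\) imply \(\Phi(x_1,x_3)=\Phi(x_2,x_4)\); for \(a_0\in\Phi(X^2)\), \(\Phi\) is \(a_0\)-coherent if \(\Phi^{-1}(a_0)\) is an equivalence relation on \(X\) and \(\Phi\) is strongly consistent with it. For \(\Phi\) with domain \(X^2\) and \(Y=\Phi(X^2)\), \(\langle y_1,y_2\rangle\in u_\Phi\) iff \(y_1,y_2\in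 Y\) and there are \(x_1,x_2,x_3\in X\) with \(y_1=\Phi(x_1,x_3)\) and \(y_2=\Phi(x_1,x_2)=\Phi(x_2,x_3)\). The transitive closure is \(\gamma^t=\bigcup_{n\ge1}\gamma^n\) with \(\gamma^{n+1}=\gamma^n\circ\gamma\), where \(\langle x,y\rangle\in\alpha\circ\beta\) iff there is \(z\) with \(\langle x,z\rangle\in\alpha\), \(\langle z,y\rangle\in\beta\). *)

theory Defs
  imports Main
begin

definition range2 :: "'a set \<Rightarrow> ('a \<Rightarrow> 'a \<Rightarrow> 'b) \<Rightarrow> 'b set" where
  "range2 X \<Phi> = {\<Phi> x y | x y. x \<in> X \<and> y \<in> X}"

definition least_elem :: "'q set \<Rightarrow> ('q \<times> 'q) set \<Rightarrow> 'q \<Rightarrow> bool" where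
  "least_elem Q r q0 \<longleftrightarrow> q0 \<in> Q \<and> (\<forall>q\<in>Q. (q0, q) \<in> r)"

definition perm3 :: "nat \<Rightarrow> nat \<Rightarrow> nat \<Rightarrow> bool" where
  "perm3 i1 i2 i3 \<longleftrightarrow> {i1, i2, i3} = {0, 1, 2}"

definition pseudoultrametric ::
  "'q set \<Rightarrow> ('q \<times> 'q) set \<Rightarrow> 'q \<Rightarrow> 'z set \<Rightarrow> ('z \<Rightarrow> 'z \<Rightarrow> 'q) \<Rightarrow> bool" where
  "pseudoultrametric Q r q0 Z d \<longleftrightarrow>
     (\<forall>x\<in>Z. \<forall>y\<in>Z. d x y \<in> Q) \<and>
     (\<forall>x\<in>Z. \<forall>y\<in>Z. d x y = d y x) \<and>
     (\<forall>z\<in>Z. d z z = q0) \<and>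
     (\<forall>z1\<in>Z. \<forall>z2\<in>Z. \<forall>z3\<in>Z. let z = (\<lambda>i. [z1, z2, z3] ! i) in
        \<exists>i1 i2 i3. perm3 i1 i2 i3 \<and>
          (d (z i1) (z i3), d (z i1) (z i2)) \<in> r \<and>
          d (z i1) (z i2) = d (z i2) (z i3))"

definition comb_similar ::
  "'a set \<Rightarrow> ('a \<Rightarrow> 'a \<Rightarrow> 'b) \<Rightarrow> 'c set \<Rightarrow> ('c \<Rightarrow> 'c \<Rightarrow> 'd) \<Rightarrow> bool" where
  "comb_similar X \<Phi> Y \<Psi> \<longleftrightarrow>
     (\<exists>f g. bij_betw f (range2 X \<Phi>) (range2 Y \<Psi>) \<and> bij_betw g Y X \<and>
        (\<forall>x\<in>Y. \<forall>y\<in>Y. \<Psi> x y = f (\<Phi> (g x) (g y))))"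

definition strongly_consistent :: "'a set \<Rightarrow> ('a \<Rightarrow> 'a \<Rightarrow> 'b) \<Rightarrow> ('a \<times> 'a) set \<Rightarrow> bool" where
  "strongly_consistent X \<Phi> R \<longleftrightarrow>
     (\<forall>x1 x2 x3 x4. (x1, x2) \<in> R \<longrightarrow> (x3, x4) \<in> R \<longrightarrow> \<Phi> x1 x3 = \<Phi> x2 x4)"

definition coherent :: "'a set \<Rightarrow> ('a \<Rightarrow> 'a \<Rightarrow> 'b) \<Rightarrow> 'b \<Rightarrow> bool" where
  "coherent X \<Phi> a0 \<longleftrightarrow>
     (let R = {(x, y). x \<in> X \<and> y \<in> X \<and> \<Phi> x y = a0} in
       equiv X R \<and> strongly_consistent X \<Phi> R)"

definition u_rel :: "'a set \<Rightarrow> ('a \<Rightarrow> 'a \<Rightarrow> 'b) \<Rightarrow> ('b \<times> 'b) set" where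
  "u_rel X \<Phi> = {(y1, y2). y1 \<in> range2 X \<Phi> \<and> y2 \<in> range2 X \<Phi> \<and>
     (\<exists>x1\<in>X. \<exists>x2\<in>X. \<exists>x3\<in>X. y1 = \<Phi> x1 x3 \<and> y2 = \<Phi> x1 x2 \<and> \<Phi> x1 x2 = \<Phi> x2 x3)}"

definition le_Phi :: "'a set \<Rightarrow> ('a \<Rightarrow> 'a \<Rightarrow> 'b) \<Rightarrow> ('b \<times> 'b) set" where
  "le_Phi X \<Phi> = (u_rel X \<Phi>)\<^sup>+ \<union> Id_on (range2 X \<Phi>)"

definition cond_i :: "'a set \<Rightarrow> ('a \<Rightarrow> 'a \<Rightarrow> 'b) \<Rightarrow> 'c set \<Rightarrow> ('c \<Rightarrow> 'c \<Rightarrow> 'd) \<Rightarrow>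
    'd set \<Rightarrow> ('d \<times> 'd) set \<Rightarrow> 'd \<Rightarrow> bool" where
  "cond_i X \<Phi> Y d Q r q0 \<longleftrightarrow> linear_order_on Q r \<and> least_elem Q r q0 \<and>
     pseudoultrametric Q r q0 Y d \<and> comb_similar X \<Phi> Y d"

definition cond_ii :: "'a set \<Rightarrow> ('a \<Rightarrow> 'a \<Rightarrow> 'b) \<Rightarrow> 'c set \<Rightarrow> ('c \<Rightarrow> 'c \<Rightarrow> 'd) \<Rightarrow>
    'd set \<Rightarrow> ('d \<times> 'd) set \<Rightarrow> 'd \<Rightarrow> bool" where
  "cond_ii X \<Phi> Y d Q r q0 \<longleftrightarrow> partial_order_on Q r \<and> least_elem Q r q0 \<and>
     pseudoultrametric Q r q0 Y d \<and> comb_similar X \<Phi> Y d"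

definition cond_iii :: "'a set \<Rightarrow> ('a \<Rightarrow> 'a \<Rightarrow> 'b) \<Rightarrow> bool" where
  "cond_iii X \<Phi> \<longleftrightarrow>
     (\<forall>x\<in>X. \<forall>y\<in>X. \<Phi> x y = \<Phi> y x) \<and>
     antisym ((u_rel X \<Phi>)\<^sup>+) \<and>
     (\<exists>a0\<in>range2 X \<Phi>. coherent X \<Phi> a0) \<and>
     (\<forall>x1\<in>X. \<forall>x2\<in>X. \<forall>x3\<in>X. let x = (\<lambda>i. [x1, x2, x3] ! i) in
        \<exists>i1 i2 i3. perm3 i1 i2 i3 \<and> \<Phi> (x i1) (x i2) = \<Phi> (x i2) (x i3))"

definition cond_iv :: "'a set \<Rightarrow> ('a \<Rightarrow> 'a \<Rightarrow> 'b) \<Rightarrow> bool" where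
  "cond_iv X \<Phi> \<longleftrightarrow>
     (\<exists>b0\<in>range2 X \<Phi>. (\<forall>x\<in>X. \<Phi> x x = b0) \<and>
        partial_order_on (range2 X \<Phi>) (le_Phi X \<Phi>) \<and>
        least_elem (range2 X \<Phi>) (le_Phi X \<Phi>) b0 \<and>
        pseudoultrametric (range2 X \<Phi>) (le_Phi X \<Phi>) b0 X \<Phi>)"

end

theory Submission
  imports Defs
begin

text \<open>
  If \<Phi> is combinatorially similar to a pseudoultrametric d with values in a poset, pulling the
  order back along the bijection of values makes \<Phi> itself a pseudoultrametric on its range.
  For any pseudoultrametric, a single \<open>u\<close>-step goes down the order, so \<open>u\<^sup>t\<close> lies in the
  order and is antisymmetric; the points at distance \<open>q\<^sub>0\<close> form the coherent class; and every
  triangle is isosceles.  Conversely, if every triangle has two equal sides, one \<open>u\<close>-step puts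
  the third side below them, so \<Phi> is a pseudoultrametric for \<open>u\<^sup>t\<close> plus the diagonal, whose
  least element is the common value of \<open>\<Phi>(x, x)\<close>.  Finally Szpilrajn's theorem extends this
  partial order to a linear one, which keeps \<Phi> a pseudoultrametric.
\<close>

lemma perm3_cases:
  assumes "perm3 i1 i2 i3"
  shows "(i1, i2, i3) \<in> {(0, 1, 2), (0, 2, 1), (1, 0, 2), (1, 2, 0), (2, 0, 1), (2, 1, 0)}"
proof -
  have e: "{i1, i2, i3} = {0, 1, 2}" using assms unfolding perm3_def .
  have "i1 \<in> {0, 1, 2}" "i2 \<in> {0, 1, 2}" "i3 \<in> {0, 1, 2}"
    by (simp_all only: e[symmetric]) simp_all
  moreover have "{0, 1, 2} \<subseteq> {i1, i2, i3}"
    using e by (rule equalityD2)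
  ultimately show ?thesis
    by (elim insertE emptyE; simp)
qed

lemma ex_perm3:
  "(\<exists>i1 i2 i3. perm3 i1 i2 i3 \<and> P i1 i2 i3) \<longleftrightarrow>
     P 0 1 2 \<or> P 0 2 1 \<or> P 1 0 2 \<or> P 1 2 0 \<or> P 2 0 1 \<or> P 2 1 0"
proof -
  have "perm3 0 1 2" "perm3 0 2 1" "perm3 1 0 2" "perm3 1 2 0" "perm3 2 0 1" "perm3 2 1 0"
    unfolding perm3_def by (simp_all add: insert_commute)
  then show ?thesis
    using perm3_cases by blast
qed

lemma ball_triples_perm3_iff:
  "(\<forall>z1\<in>Z. \<forall>z2\<in>Z. \<forall>z3\<in>Z. let z = (\<lambda>i. [z1, z2, z3] ! i) in
      \<exists>i1 i2 i3. perm3 i1 i2 i3 \<and> P (z i1) (z i2) (z i3)) \<longleftrightarrow>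
   (\<forall>a\<in>Z. \<forall>b\<in>Z. \<forall>c\<in>Z. P a b c \<or> P a c b \<or> P b a c \<or> P b c a \<or> P c a b \<or> P c b a)"
  unfolding Let_def ex_perm3 by (simp add: numeral_2_eq_2)

definition isosceles_le :: "('q \<times> 'q) set \<Rightarrow> 'q \<Rightarrow> 'q \<Rightarrow> 'q \<Rightarrow> bool" where
  "isosceles_le r u v w \<longleftrightarrow>
     (u = v \<and> (w, u) \<in> r) \<or> (u = w \<and> (v, u) \<in> r) \<or> (v = w \<and> (u, v) \<in> r)"

lemma pseudoultrametric_iff:
  "pseudoultrametric Q r q0 Z d \<longleftrightarrow>
     (\<forall>x\<in>Z. \<forall>y\<in>Z. d x y \<in> Q \<and> d x y = d y x) \<and> (\<forall>z\<in>Z. d z z = q0) \<and>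
     (\<forall>a\<in>Z. \<forall>b\<in>Z. \<forall>c\<in>Z. isosceles_le r (d a b) (d b c) (d a c))"
proof -
  let ?P = "\<lambda>u v w. (d u w, d u v) \<in> r \<and> d u v = d v w"
  have six_iff:
    "?P a b c \<or> ?P a c b \<or> ?P b a c \<or> ?P b c a \<or> ?P c a b \<or> ?P c b a \<longleftrightarrow>
     isosceles_le r (d a b) (d b c) (d a c)"
    if "d b a = d a b" "d c a = d a c" "d c b = d b c" for a b c
    unfolding isosceles_le_def that by auto
  have "(\<forall>a\<in>Z. \<forall>b\<in>Z. \<forall>c\<in>Z. ?P a b c \<or> ?P a c b \<or> ?P b a c \<or> ?P b c a \<or> ?P c a b \<or> ?P c b a)
      \<longleftrightarrow> (\<forall>a\<in>Z. \<forall>b\<in>Z. \<forall>c\<in>Z. isosceles_le r (d a b) (d b c) (d a c))"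
    if sym: "\<forall>x\<in>Z. \<forall>y\<in>Z. d x y = d y x"
  proof -
    have "?P a b c \<or> ?P a c b \<or> ?P b a c \<or> ?P b c a \<or> ?P c a b \<or> ?P c b a \<longleftrightarrow>
        isosceles_le r (d a b) (d b c) (d a c)" if "a \<in> Z" "b \<in> Z" "c \<in> Z" for a b c
      using that by (intro six_iff) (simp_all add: sym)
    then show ?thesis by simp
  qed
  then show ?thesis
    unfolding pseudoultrametric_def ball_triples_perm3_iff[where P = ?P] by blast
qed

lemma cond_iii_iff:
  "cond_iii X \<Phi> \<longleftrightarrow>
     (\<forall>x\<in>X. \<forall>y\<in>X. \<Phi> x y = \<Phi> y x) \<and> antisym ((u_rel X \<Phi>)\<^sup>+) \<and>
     (\<exists>a0\<in>range2 X \<Phi>. coherent X \<Phi> a0) \<and>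
     (\<forall>a\<in>X. \<forall>b\<in>X. \<forall>c\<in>X. \<Phi> a b = \<Phi> b c \<or> \<Phi> a b = \<Phi> a c \<or> \<Phi> b c = \<Phi> a c)"
proof -
  let ?P = "\<lambda>u v w. \<Phi> u v = \<Phi> v w"
  have six_iff:
    "?P a b c \<or> ?P a c b \<or> ?P b a c \<or> ?P b c a \<or> ?P c a b \<or> ?P c b a \<longleftrightarrow>
     \<Phi> a b = \<Phi> b c \<or> \<Phi> a b = \<Phi> a c \<or> \<Phi> b c = \<Phi> a c"
    if "\<Phi> b a = \<Phi> a b" "\<Phi> c a = \<Phi> a c" "\<Phi> c b = \<Phi> b c" for a b c
    unfolding that by auto
  have "(\<forall>a\<in>X. \<forall>b\<in>X. \<forall>c\<in>X. ?P a b c \<or> ?P a c b \<or> ?P b a c \<or> ?P b c a \<or> ?P c a b \<or> ?P c b a)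
      \<longleftrightarrow> (\<forall>a\<in>X. \<forall>b\<in>X. \<forall>c\<in>X. \<Phi> a b = \<Phi> b c \<or> \<Phi> a b = \<Phi> a c \<or> \<Phi> b c = \<Phi> a c)"
    if sym: "\<forall>x\<in>X. \<forall>y\<in>X. \<Phi> x y = \<Phi> y x"
  proof -
    have "?P a b c \<or> ?P a c b \<or> ?P b a c \<or> ?P b c a \<or> ?P c a b \<or> ?P c b a \<longleftrightarrow>
        \<Phi> a b = \<Phi> b c \<or> \<Phi> a b = \<Phi> a c \<or> \<Phi> b c = \<Phi> a c" if "a \<in> X" "b \<in> X" "c \<in> X" for a b c
      using that by (intro six_iff) (simp_all add: sym)
    then show ?thesis by simp
  qed
  then show ?thesis
    unfolding cond_iii_def ball_triples_perm3_iff[where P = ?P] by blast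
qed

lemma u_relI:
  assumes "x1 \<in> X" "x2 \<in> X" "x3 \<in> X" "\<Phi> x1 x2 = \<Phi> x2 x3"
  shows "(\<Phi> x1 x3, \<Phi> x1 x2) \<in> u_rel X \<Phi>"
  using assms unfolding u_rel_def range2_def by blast

lemma pseudoultrametric_u_rel_subset:
  assumes "refl_on Q r" and "pseudoultrametric Q r q0 Z d"
  shows "u_rel Z d \<subseteq> r"
proof
  fix p assume "p \<in> u_rel Z d"
  then obtain a b c where abc: "a \<in> Z" "b \<in> Z" "c \<in> Z"
    and p: "p = (d a c, d a b)" and eq: "d a b = d b c"
    unfolding u_rel_def by blast
  have "isosceles_le r (d a b) (d b c) (d a c)" "d a b \<in> Q"
    using assms(2) abc unfolding pseudoultrametric_iff by blast+
  then show "p \<in> r"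
    using eq p refl_onD[OF assms(1)] unfolding isosceles_le_def by auto
qed

lemma pseudoultrametric_zero_dist_eq:
  assumes "antisym r" and "least_elem Q r q0" and "pseudoultrametric Q r q0 Z d"
    and "a \<in> Z" "b \<in> Z" "c \<in> Z" and "d a b = q0"
  shows "d a c = d b c"
proof -
  have iso: "isosceles_le r (d a b) (d b c) (d a c)" and "d a c \<in> Q" "d b c \<in> Q"
    using assms(3-6) unfolding pseudoultrametric_iff by blast+
  then have "(q0, d a c) \<in> r" "(q0, d b c) \<in> r"
    using assms(2) unfolding least_elem_def by blast+
  then show ?thesis
    using iso assms(7) antisymD[OF assms(1)] unfolding isosceles_le_def by metis
qed

lemma pseudoultrametric_coherent:
  assumes "antisym r" and "least_elem Q r q0" and pu: "pseudoultrametric Q r q0 Z d"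
  shows "coherent Z d q0"
proof -
  let ?R = "{(x, y). x \<in> Z \<and> y \<in> Z \<and> d x y = q0}"
  have sym: "d x y = d y x" if "x \<in> Z" "y \<in> Z" for x y
    using pu that unfolding pseudoultrametric_iff by blast
  have diag: "d z z = q0" if "z \<in> Z" for z
    using pu that unfolding pseudoultrametric_iff by blast
  note zero_eq = pseudoultrametric_zero_dist_eq[OF assms]
  have "equiv Z ?R"
  proof (rule equivI)
    show "refl_on Z ?R" using diag by (auto intro: refl_onI)
    show "sym ?R" using sym by (auto intro: symI)
    show "trans ?R"
    proof (rule transI)
      fix x y z assume "(x, y) \<in> ?R" "(y, z) \<in> ?R"
      then show "(x, z) \<in> ?R" using zero_eq[of y x z] sym by auto
    qed
  qed auto
  moreover have "strongly_consistent Z d ?R"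
    unfolding strongly_consistent_def
  proof (intro allI impI)
    fix x1 x2 x3 x4 assume "(x1, x2) \<in> ?R" "(x3, x4) \<in> ?R"
    then show "d x1 x3 = d x2 x4"
      using zero_eq[of x1 x2 x3] zero_eq[of x3 x4 x2] sym[of x2 x3] sym[of x2 x4] by auto
  qed
  ultimately show ?thesis
    unfolding coherent_def Let_def by blast
qed

lemma pseudoultrametric_cond_iii:
  assumes po: "partial_order_on Q r" and least: "least_elem Q r q0"
    and pu: "pseudoultrametric Q r q0 Z d" and "Z \<noteq> {}"
  shows "cond_iii Z d"
proof -
  have "(u_rel Z d)\<^sup>+ \<subseteq> r"
    using trancl_mono_subset[OF pseudoultrametric_u_rel_subset[OF partial_order_onD(1)[OF po] pu]]
      partial_order_onD(2)[OF po] by simp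
  then have "antisym ((u_rel Z d)\<^sup>+)"
    using partial_order_onD(3)[OF po] by (rule antisym_subset)
  moreover have "\<exists>a0\<in>range2 Z d. coherent Z d a0"
  proof -
    obtain z where z: "z \<in> Z" using \<open>Z \<noteq> {}\<close> by blast
    then have "d z z \<in> range2 Z d" unfolding range2_def by blast
    moreover have "d z z = q0" using pu z unfolding pseudoultrametric_iff by blast
    ultimately have "q0 \<in> range2 Z d" by simp
    then show ?thesis
      using pseudoultrametric_coherent[OF partial_order_onD(3)[OF po] least pu] by blast
  qed
  ultimately show ?thesis
    using pu unfolding cond_iii_iff pseudoultrametric_iff isosceles_le_def by blast
qed

lemma partial_order_on_inv_image:
  assumes "partial_order_on Q r" and "inj_on f A" and "f ` A \<subseteq> Q"
  shows "partial_order_on A (Restr (inv_image r f) A)"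
proof -
  have "refl_on A (Restr (inv_image r f) A)"
    using assms(3) partial_order_onD(1)[OF assms(1)] by (auto simp: refl_on_def)
  moreover have "trans (Restr (inv_image r f) A)"
    using partial_order_onD(2)[OF assms(1)] by (intro trans_Restr trans_inv_image)
  moreover have "antisym (Restr (inv_image r f) A)"
  proof (rule antisymI)
    fix a b assume "(a, b) \<in> Restr (inv_image r f) A" "(b, a) \<in> Restr (inv_image r f) A"
    then show "a = b"
      using antisymD[OF partial_order_onD(3)[OF assms(1)]] inj_onD[OF assms(2)] by auto
  qed
  ultimately show ?thesis
    unfolding partial_order_on_def preorder_on_def by blast
qed

lemma isosceles_le_inv_image:
  assumes "inj_on f A" and "u \<in> A" "v \<in> A" "w \<in> A" and "isosceles_le r (f u) (f v) (f w)"
  shows "isosceles_le (Restr (inv_image r f) A) u v w"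
  using assms unfolding isosceles_le_def by (auto simp: inj_on_eq_iff)

lemma comb_similar_pseudoultrametric_on_range:
  assumes sim: "comb_similar X \<Phi> Y d" and po: "partial_order_on Q r" and least: "least_elem Q r q0"
    and pu: "pseudoultrametric Q r q0 Y d" and "X \<noteq> {}"
  shows "\<exists>r' q0'. partial_order_on (range2 X \<Phi>) r' \<and> least_elem (range2 X \<Phi>) r' q0' \<and>
           pseudoultrametric (range2 X \<Phi>) r' q0' X \<Phi>"
proof -
  let ?R = "range2 X \<Phi>"
  obtain f g where f: "bij_betw f ?R (range2 Y d)" and g: "bij_betw g Y X"
    and d_eq: "\<forall>x\<in>Y. \<forall>y\<in>Y. d x y = f (\<Phi> (g x) (g y))"
    using sim unfolding comb_similar_def by blast
  define h where "h = inv_into Y g"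
  have hY: "h x \<in> Y" if "x \<in> X" for x
    using bij_betw_apply[OF bij_betw_inv_into[OF g]] that unfolding h_def .
  have f\<Phi>: "f (\<Phi> x y) = d (h x) (h y)" if "x \<in> X" "y \<in> X" for x y
    using d_eq hY[OF that(1)] hY[OF that(2)] bij_betw_inv_into_right[OF g] that
    unfolding h_def by simp
  have R: "\<Phi> x y \<in> ?R" if "x \<in> X" "y \<in> X" for x y
    using that unfolding range2_def by blast
  have inj: "inj_on f ?R"
    using f by (rule bij_betw_imp_inj_on)
  have fR: "f ` ?R \<subseteq> Q"
    using pu hY f\<Phi> unfolding pseudoultrametric_iff range2_def by auto
  obtain x0 where x0: "x0 \<in> X" using \<open>X \<noteq> {}\<close> by blast
  have f_x0: "f (\<Phi> x0 x0) = q0"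
    using pu f\<Phi>[OF x0 x0] hY[OF x0] unfolding pseudoultrametric_iff by simp
  have "least_elem ?R (Restr (inv_image r f) ?R) (\<Phi> x0 x0)"
    using least fR R[OF x0 x0] f_x0 unfolding least_elem_def by auto
  moreover have "pseudoultrametric ?R (Restr (inv_image r f) ?R) (\<Phi> x0 x0) X \<Phi>"
    unfolding pseudoultrametric_iff
  proof (intro conjI ballI)
    fix x y assume "x \<in> X" "y \<in> X"
    then show "\<Phi> x y \<in> ?R" and "\<Phi> x y = \<Phi> y x"
      using R inj_onD[OF inj] f\<Phi> hY pu unfolding pseudoultrametric_iff by metis+
  next
    fix z assume "z \<in> X"
    then show "\<Phi> z z = \<Phi> x0 x0"
      using R x0 inj_onD[OF inj] f\<Phi> f_x0 hY pu unfolding pseudoultrametric_iff by metis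
  next
    fix a b c assume abc: "a \<in> X" "b \<in> X" "c \<in> X"
    then have "isosceles_le r (f (\<Phi> a b)) (f (\<Phi> b c)) (f (\<Phi> a c))"
      using pu hY f\<Phi> unfolding pseudoultrametric_iff by simp
    then show "isosceles_le (Restr (inv_image r f) ?R) (\<Phi> a b) (\<Phi> b c) (\<Phi> a c)"
      using isosceles_le_inv_image[OF inj] R abc by blast
  qed
  ultimately show ?thesis
    using partial_order_on_inv_image[OF po inj fR] by blast
qed

lemma comb_similar_refl: "comb_similar X \<Phi> X \<Phi>"
  unfolding comb_similar_def by (intro exI[of _ id]) simp

lemma cond_ii_imp_cond_iii:
  assumes "cond_ii X \<Phi> Y d Q r q0" and "X \<noteq> {}"
  shows "cond_iii X \<Phi>"
  using assms comb_similar_pseudoultrametric_on_range pseudoultrametric_cond_iii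
  unfolding cond_ii_def by metis

lemma partial_order_on_trancl_Un_Id_on:
  assumes "R \<subseteq> A \<times> A" and "antisym (R\<^sup>+)"
  shows "partial_order_on A (R\<^sup>+ \<union> Id_on A)"
proof -
  have "R\<^sup>+ \<union> Id_on A \<subseteq> A \<times> A"
    using trancl_subset_Sigma[OF assms(1)] by blast
  moreover have "trans (R\<^sup>+ \<union> Id_on A)"
    by (rule transI) (auto intro: trancl_trans)
  moreover have "antisym (R\<^sup>+ \<union> Id_on A)"
    using antisymD[OF assms(2)] by (auto intro: antisymI)
  ultimately show ?thesis
    unfolding partial_order_on_def preorder_on_def refl_on_def by blast
qed

lemma cond_iii_imp_cond_iv:
  assumes "cond_iii X \<Phi>"
  shows "cond_iv X \<Phi>"
proof -
  let ?R = "range2 X \<Phi>"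
  obtain a0 where sym: "\<forall>x\<in>X. \<forall>y\<in>X. \<Phi> x y = \<Phi> y x" and anti: "antisym ((u_rel X \<Phi>)\<^sup>+)"
    and a0: "a0 \<in> ?R" and coh: "coherent X \<Phi> a0"
    and two_equal: "\<forall>a\<in>X. \<forall>b\<in>X. \<forall>c\<in>X. \<Phi> a b = \<Phi> b c \<or> \<Phi> a b = \<Phi> a c \<or> \<Phi> b c = \<Phi> a c"
    using assms unfolding cond_iii_iff by blast
  have "refl_on X {(x, y). x \<in> X \<and> y \<in> X \<and> \<Phi> x y = a0}"
    using coh unfolding coherent_def Let_def equiv_def by blast
  then have diag: "\<forall>x\<in>X. \<Phi> x x = a0"
    unfolding refl_on_def by blast
  have u_le: "(p, q) \<in> le_Phi X \<Phi>" if "(p, q) \<in> u_rel X \<Phi>" for p q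
    using that unfolding le_Phi_def by blast
  have "partial_order_on ?R (le_Phi X \<Phi>)"
    unfolding le_Phi_def
    by (rule partial_order_on_trancl_Un_Id_on[OF _ anti]) (auto simp: u_rel_def)
  moreover have "least_elem ?R (le_Phi X \<Phi>) a0"
    unfolding least_elem_def
  proof (intro conjI ballI)
    fix q assume "q \<in> ?R"
    then obtain x y where xy: "x \<in> X" "y \<in> X" "q = \<Phi> x y"
      unfolding range2_def by blast
    then have "(\<Phi> x x, \<Phi> x y) \<in> u_rel X \<Phi>"
      using sym by (intro u_relI) auto
    then show "(a0, q) \<in> le_Phi X \<Phi>"
      using diag xy u_le by simp
  qed (rule a0)
  moreover have "pseudoultrametric ?R (le_Phi X \<Phi>) a0 X \<Phi>"
    unfolding pseudoultrametric_iff
  proof (intro conjI ballI)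
    fix a b c assume abc: "a \<in> X" "b \<in> X" "c \<in> X"
    have "(\<Phi> a c, \<Phi> a b) \<in> u_rel X \<Phi>" if "\<Phi> a b = \<Phi> b c"
      using abc that by (intro u_relI)
    moreover have "(\<Phi> b c, \<Phi> a b) \<in> u_rel X \<Phi>" if "\<Phi> a b = \<Phi> a c"
      using u_relI[of b X a c \<Phi>] abc that sym by simp
    moreover have "(\<Phi> a b, \<Phi> b c) \<in> u_rel X \<Phi>" if "\<Phi> b c = \<Phi> a c"
      using u_relI[of b X c a \<Phi>] abc that sym by simp
    ultimately show "isosceles_le (le_Phi X \<Phi>) (\<Phi> a b) (\<Phi> b c) (\<Phi> a c)"
      using two_equal abc u_le unfolding isosceles_le_def by metis
  qed (use sym diag in \<open>auto simp: range2_def\<close>)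
  ultimately show ?thesis
    unfolding cond_iv_def using a0 diag by blast
qed

lemma partial_order_on_extend:
  assumes po: "partial_order_on A r" and ba: "(b, a) \<notin> r"
  shows "partial_order_on A (r \<union> {(x, y). (x, a) \<in> r \<and> (b, y) \<in> r})"
proof -
  have tr: "\<And>x y z. (x, y) \<in> r \<Longrightarrow> (y, z) \<in> r \<Longrightarrow> (x, z) \<in> r"
    using partial_order_onD(2)[OF po] by (meson transD)
  have an: "\<And>x y. (x, y) \<in> r \<Longrightarrow> (y, x) \<in> r \<Longrightarrow> x = y"
    using partial_order_onD(3)[OF po] by (meson antisymD)
  \<comment> \<open>a cycle through a new pair would put b below a\<close>
  have "trans (r \<union> {(x, y). (x, a) \<in> r \<and> (b, y) \<in> r})"
    by (rule transI) (use ba tr in blast)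
  moreover have "antisym (r \<union> {(x, y). (x, a) \<in> r \<and> (b, y) \<in> r})"
    by (rule antisymI) (use ba tr an in blast)
  ultimately show ?thesis
    using po partial_order_onD(4)[OF po] unfolding partial_order_on_def preorder_on_def refl_on_def
    by blast
qed

lemma linear_order_on_extension:
  assumes "partial_order_on A p"
  shows "\<exists>r. linear_order_on A r \<and> p \<subseteq> r"
proof -
  let ?S = "{r. partial_order_on A r \<and> p \<subseteq> r}"
  have "\<exists>M\<in>?S. \<forall>r\<in>?S. M \<subseteq> r \<longrightarrow> r = M"
  proof (rule subset_Zorn_nonempty)
    show "?S \<noteq> {}" using assms by blast
  next
    fix C assume C: "C \<noteq> {}" "subset.chain ?S C"
    then have S: "C \<subseteq> ?S" and ch: "chain\<^sub>\<subseteq> C"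
      unfolding subset_chain_def chain_subset_def by blast+
    have "trans (\<Union>C)"
      using S by (intro chain_subset_trans_Union[OF ch]) (auto dest: partial_order_onD(2))
    moreover have "antisym (\<Union>C)"
      using S by (intro chain_subset_antisym_Union[OF ch]) (auto dest: partial_order_onD(3))
    ultimately show "\<Union>C \<in> ?S"
      using S C(1) unfolding partial_order_on_def preorder_on_def refl_on_def by blast
  qed
  then obtain M where M: "partial_order_on A M" "p \<subseteq> M" and max: "\<forall>r\<in>?S. M \<subseteq> r \<longrightarrow> r = M"
    by blast
  have "total_on A M"
    unfolding total_on_def
  proof (intro ballI impI)
    fix a b assume ab: "a \<in> A" "b \<in> A" "a \<noteq> b"
    show "(a, b) \<in> M \<or> (b, a) \<in> M"
    proof (rule ccontr)
      let ?M' = "M \<union> {(x, y). (x, a) \<in> M \<and> (b, y) \<in> M}"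
      assume "\<not> ((a, b) \<in> M \<or> (b, a) \<in> M)"
      then have "?M' \<in> ?S" and "(a, b) \<notin> M"
        using partial_order_on_extend[OF M(1)] M(2) by auto
      then have "(a, b) \<notin> ?M'"
        using max[rule_format, OF \<open>?M' \<in> ?S\<close> Un_upper1] by simp
      moreover have "(a, b) \<in> ?M'"
        using refl_onD[OF partial_order_onD(1)[OF M(1)]] ab by blast
      ultimately show False
        by contradiction
    qed
  qed
  then show ?thesis
    using M unfolding linear_order_on_def by blast
qed

lemma pseudoultrametric_mono:
  assumes "pseudoultrametric Q r q0 Z d" and "r \<subseteq> r'"
  shows "pseudoultrametric Q r' q0 Z d"
  using assms unfolding pseudoultrametric_iff isosceles_le_def by blast

lemma cond_iv_imp_cond_i:
  assumes "cond_iv X \<Phi>"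
  shows "\<exists>r b0. cond_i X \<Phi> X \<Phi> (range2 X \<Phi>) r b0"
proof -
  obtain b0 where po: "partial_order_on (range2 X \<Phi>) (le_Phi X \<Phi>)"
    and least: "least_elem (range2 X \<Phi>) (le_Phi X \<Phi>) b0"
    and pu: "pseudoultrametric (range2 X \<Phi>) (le_Phi X \<Phi>) b0 X \<Phi>"
    using assms unfolding cond_iv_def by blast
  obtain r where r: "linear_order_on (range2 X \<Phi>) r" "le_Phi X \<Phi> \<subseteq> r"
    using linear_order_on_extension[OF po] by blast
  have "least_elem (range2 X \<Phi>) r b0"
    using least r(2) unfolding least_elem_def by blast
  then show ?thesis
    using r pseudoultrametric_mono[OF pu r(2)] comb_similar_refl unfolding cond_i_def by blast
qed

theorem theorem3p18:
  fixes X :: "'a set" and \<Phi> :: "'a \<Rightarrow> 'a \<Rightarrow> 'b"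
    and Y' :: "'c set" and d' :: "'c \<Rightarrow> 'c \<Rightarrow> 'd" and Q' :: "'d set"
    and r' :: "('d \<times> 'd) set" and q0' :: 'd
  assumes "X \<noteq> {}"
  shows "((\<exists>(Y :: 'a set) (d :: 'a \<Rightarrow> 'a \<Rightarrow> 'b) Q r q0. cond_i X \<Phi> Y d Q r q0)
            \<longleftrightarrow> (\<exists>(Y :: 'a set) (d :: 'a \<Rightarrow> 'a \<Rightarrow> 'b) Q r q0. cond_ii X \<Phi> Y d Q r q0))
       \<and> ((\<exists>(Y :: 'a set) (d :: 'a \<Rightarrow> 'a \<Rightarrow> 'b) Q r q0. cond_ii X \<Phi> Y d Q r q0)
            \<longleftrightarrow> cond_iii X \<Phi>)
       \<and> (cond_iii X \<Phi> \<longleftrightarrow> cond_iv X \<Phi>)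
       \<and> (cond_ii X \<Phi> Y' d' Q' r' q0' \<longrightarrow> cond_iii X \<Phi>)"
proof -
  let ?i = "\<exists>(Y :: 'a set) (d :: 'a \<Rightarrow> 'a \<Rightarrow> 'b) Q r q0. cond_i X \<Phi> Y d Q r q0"
  let ?ii = "\<exists>(Y :: 'a set) (d :: 'a \<Rightarrow> 'a \<Rightarrow> 'b) Q r q0. cond_ii X \<Phi> Y d Q r q0"
  have i_ii: "?i \<Longrightarrow> ?ii"
    unfolding cond_i_def cond_ii_def linear_order_on_def by blast
  have ii_iii: "?ii \<Longrightarrow> cond_iii X \<Phi>"
    by (elim exE) (erule cond_ii_imp_cond_iii[OF _ assms])
  have iv_i: "cond_iv X \<Phi> \<Longrightarrow> ?i"
    using cond_iv_imp_cond_i by blast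
  show ?thesis
    using i_ii ii_iii iv_i cond_iii_imp_cond_iv cond_ii_imp_cond_iii[OF _ assms, of \<Phi> Y' d' Q' r' q0']
    by blast
qed

end
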